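(* Let $\mu=(p,q,r,s)\in\mathbb{C}^4$ and $\phi\in\Phi_\mu$. Suppose $X\in\Omega_1$, $Y\in\Omega_2$, $Z\in\Omega_3$ meet at a vertex $v$, and the arrows assigned by $\phi$ on the edges $X\cap Y$ and $X\cap Z$ both point away from $v$. Then, writing $x=\phi(X),y=\phi(Y),z=\phi(Z)$, at least one of the following holds: $|x|\le 2+\frac{|q|+|r|}{4}$; $|y|<2$; $|z|<2$.
   Context: Let $\Sigma$ be a countably infinite simplicial tree, properly embedded in the plane, all of whose vertices have degree $3$. A complementary region is the closure of a connected component of the complement of $\Sigma$; $\Omega$ is the set of complementary regions, $E(\Sigma)$ the set of edges. Every edge $e$ is the intersection of exactly two regions $X,Y$, and its two endpoints lie on two further regions $Z,W$ respectively; write $e\leftrightarrow(X,Y;Z,W)$. Three regions meet at each vertex. Fix a coloring $\mathcal C:\Omega\cup E(\Sigma)\to\{1,2,3\}$ such that for every $e\leftrightarrow(X,Y;Z,W)$, $\mathcal C(e)=\mathcal C(Z)=\mathcal C(W)$ and $\mathcal C(e),\mathcal C(X),\mathcal C(Y)$ are pairwise distinct; $\Omega_i$, $E_i$ denote regions/edges of color $i$. For $\mu=(p,q,r,s)\in\mathbb{C}^4$, a $\mu$-Markoff map is $\phi:\Omega\to\mathbb{C}$ such that (i) at every vertex with regions $X\in\Omega_1,Y\in\Omega_2,Z\in\Omega_3$, $x^2+y^2+z^2+xyz=px+qy+rz+s$ where $x=\phi(X)$, etc.; (ii) for $e\in E_1$, $e\leftrightarrow(Y,Z;X,X')$: $\phi(X)+\phi(X')=p-\phi(Y)\phi(Z)$;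 for $e\in E_2$, $e\leftrightarrow(X,Z;Y,Y')$: $\phi(Y)+\phi(Y')=q-\phi(X)\phi(Z)$; for $e\in E_3$, $e\leftrightarrow(X,Y;Z,Z')$: $\phi(Z)+\phi(Z')=r-\phi(X)\phi(Y)$. $\Phi_\mu$ is the set of such maps. Arrows: given $\phi$ and an edge $e\leftrightarrow(X,Y;Z,W)$, orient $e$ towards its endpoint lying on $W$ if $|\phi(Z)|>|\phi(W)|$, towards its endpoint lying on $Z$ if $|\phi(Z)|<|\phi(W)|$, and arbitrarily (but fixed) if $|\phi(Z)|=|\phi(W)|$. *)

theory Defs
  imports Complex_Main "HOL-Library.Countable_Set"
begin

text \<open>Combinatorial model of a countably infinite trivalent tree properly embedded
in the plane together with its complementary regions.
Vertices are elements of V, A is the (symmetric) adjacency relation, and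
R v is the set of the three complementary regions meeting at the vertex v.
An edge is a pair of adjacent vertices u, v; the two regions containing the edge
are R u \<inter> R v and the further region on which the endpoint u lies is
endreg R u v.\<close>

definition tree3 :: "'v set \<Rightarrow> ('v \<Rightarrow> 'v \<Rightarrow> bool) \<Rightarrow> bool" where
  "tree3 V A \<longleftrightarrow>
     countable V \<and> infinite V \<and>
     (\<forall>u v. A u v \<longrightarrow> u \<in> V \<and> v \<in> V \<and> u \<noteq> v \<and> A v u) \<and>
     (\<forall>v\<in>V. card {u. A v u} = 3) \<and>
     (\<forall>u\<in>V. \<forall>v\<in>V. (u, v) \<in> {(a, b). A a b}\<^sup>*) \<and>
     (\<forall>u v. A u v \<longrightarrow> (u, v) \<notin> ({(a, b). A a b} - {(u, v), (v, u)})\<^sup>*)"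

definition region_structure ::
  "'v set \<Rightarrow> ('v \<Rightarrow> 'v \<Rightarrow> bool) \<Rightarrow> ('v \<Rightarrow> 'r set) \<Rightarrow> bool" where
  "region_structure V A R \<longleftrightarrow>
     (\<forall>v\<in>V. card (R v) = 3) \<and>
     (\<forall>u v. A u v \<longrightarrow> card (R u \<inter> R v) = 2) \<and>
     (\<forall>v u w. A v u \<and> A v w \<and> u \<noteq> w \<longrightarrow> R u \<inter> R v \<noteq> R w \<inter> R v)"

definition endreg :: "('v \<Rightarrow> 'r set) \<Rightarrow> 'v \<Rightarrow> 'v \<Rightarrow> 'r" where
  "endreg R u v = the_elem (R u - R v)"

text \<open>Admissible colouring of regions (and implicitly of edges: the colour of the
edge {u,v} is the common colour of its two end regions).\<close>
definition admissible_coloring ::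
  "'v set \<Rightarrow> ('v \<Rightarrow> 'v \<Rightarrow> bool) \<Rightarrow> ('v \<Rightarrow> 'r set) \<Rightarrow> ('r \<Rightarrow> nat) \<Rightarrow> bool" where
  "admissible_coloring V A R col \<longleftrightarrow>
     (\<forall>v\<in>V. \<forall>X\<in>R v. col X \<in> {1, 2, 3}) \<and>
     (\<forall>u v. A u v \<longrightarrow>
        col (endreg R u v) = col (endreg R v u) \<and>
        (\<forall>S T. R u \<inter> R v = {S, T} \<and> S \<noteq> T \<longrightarrow>
           col S \<noteq> col T \<and> col S \<noteq> col (endreg R u v) \<and> col T \<noteq> col (endreg R u v)))"

definition edge_coef :: "complex \<Rightarrow> complex \<Rightarrow> complex \<Rightarrow> nat \<Rightarrow> complex" where
  "edge_coef p q r i = (if i = 1 then p else if i = 2 then q else r)"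

definition markoff_map ::
  "'v set \<Rightarrow> ('v \<Rightarrow> 'v \<Rightarrow> bool) \<Rightarrow> ('v \<Rightarrow> 'r set) \<Rightarrow> ('r \<Rightarrow> nat) \<Rightarrow>
   complex \<Rightarrow> complex \<Rightarrow> complex \<Rightarrow> complex \<Rightarrow> ('r \<Rightarrow> complex) \<Rightarrow> bool" where
  "markoff_map V A R col p q r s \<phi> \<longleftrightarrow>
     (\<forall>v\<in>V. \<forall>X Y Z. R v = {X, Y, Z} \<and> col X = 1 \<and> col Y = 2 \<and> col Z = 3 \<longrightarrow>
        (\<phi> X)\<^sup>2 + (\<phi> Y)\<^sup>2 + (\<phi> Z)\<^sup>2 + \<phi> X * \<phi> Y * \<phi> Z
          = p * \<phi> X + q * \<phi> Y + r * \<phi> Z + s) \<and>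
     (\<forall>u v. A u v \<longrightarrow> (\<forall>S T. R u \<inter> R v = {S, T} \<and> S \<noteq> T \<longrightarrow>
        \<phi> (endreg R u v) + \<phi> (endreg R v u)
          = edge_coef p q r (col (endreg R u v)) - \<phi> S * \<phi> T))"

text \<open>An arrow assignment for phi: arr u v means the edge {u,v} is oriented from
u towards v. The edge is oriented towards the endpoint lying on W when
|phi Z| > |phi W| (Z, W the end regions), and arbitrarily (but fixed) on ties.\<close>
definition arrows_for ::
  "('v \<Rightarrow> 'v \<Rightarrow> bool) \<Rightarrow> ('v \<Rightarrow> 'r set) \<Rightarrow> ('r \<Rightarrow> complex) \<Rightarrow> ('v \<Rightarrow> 'v \<Rightarrow> bool) \<Rightarrow> bool" where
  "arrows_for A R \<phi> arr \<longleftrightarrow>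
     (\<forall>u v. A u v \<longrightarrow>
        (arr u v \<longleftrightarrow> \<not> arr v u) \<and>
        (norm (\<phi> (endreg R u v)) > norm (\<phi> (endreg R v u)) \<longrightarrow> arr u v))"

end

theory Submission
  imports Defs
begin

text \<open>If the arrow on X \<inter> Y points away from v, the region Z' across that edge has
  |z'| \<le> |z|; the edge relation z + z' = r - xy then gives |x||y| \<le> |r| + 2|z|.
  Symmetrically |x||z| \<le> |q| + 2|y|. Adding, (|x| - 2)(|y| + |z|) \<le> |q| + |r|,
  and |y| + |z| \<ge> 4 unless |y| < 2 or |z| < 2.\<close>

lemma endreg_eq_remaining_region:
  assumes "R v = {X, Y, Z}" "X \<noteq> Z" "Y \<noteq> Z" "R v \<inter> R u = {X, Y}"
  shows "endreg R v u = Z"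
proof -
  have "Z \<notin> R u" using assms by (metis Int_iff insertCI insertE singletonD)
  then have "R v - R u = {Z}" using assms by auto
  then show ?thesis by (simp add: endreg_def)
qed

lemma markoff_edge_relation:
  assumes "markoff_map V A R col p q r s \<phi>" "A v u" "R v \<inter> R u = {S, T}" "S \<noteq> T"
  shows "\<phi> (endreg R v u) + \<phi> (endreg R u v)
           = edge_coef p q r (col (endreg R v u)) - \<phi> S * \<phi> T"
  using assms unfolding markoff_map_def by blast

lemma arrow_away_norm_le:
  assumes "arrows_for A R \<phi> arr" "A v u" "A u v" "arr v u"
  shows "norm (\<phi> (endreg R u v)) \<le> norm (\<phi> (endreg R v u))"
  using assms unfolding arrows_for_def by (meson not_le)

lemma norm_mult_le_of_edge_relation:
  fixes x y c w w' :: "'a :: real_normed_div_algebra"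
  assumes "w + w' = c - x * y" "norm w' \<le> norm w"
  shows "norm x * norm y \<le> norm c + 2 * norm w"
proof -
  have "x * y = c - w - w'" using assms(1) by (simp add: algebra_simps)
  then have "norm (x * y) \<le> norm c + norm w + norm w'"
    by (metis norm_triangle_ineq4 add_right_mono order_trans)
  then show ?thesis using assms(2) by (simp add: norm_mult)
qed

lemma le_of_two_product_bounds:
  fixes x y z q r :: real
  assumes "x * y \<le> r + 2 * z" "x * z \<le> q + 2 * y" "y \<ge> 2" "z \<ge> 2"
    and "q \<ge> 0" "r \<ge> 0"
  shows "x \<le> 2 + (q + r) / 4"
proof (cases "x \<le> 2")
  case False
  have "(x - 2) * 4 \<le> (x - 2) * (y + z)"
    using False assms(3,4) by (intro mult_left_mono) auto
  also have "\<dots> \<le> q + r" using assms(1,2) by (simp add: algebra_simps)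
  finally show ?thesis by (simp add: field_simps)
next
  case True
  moreover have "(q + r) / 4 \<ge> 0" using assms(5,6) by simp
  ultimately show ?thesis by linarith
qed

theorem lemma3p3:
  fixes V :: "'v set" and A :: "'v \<Rightarrow> 'v \<Rightarrow> bool" and R :: "'v \<Rightarrow> 'r set"
    and col :: "'r \<Rightarrow> nat" and p q r s :: complex and \<phi> :: "'r \<Rightarrow> complex"
    and arr :: "'v \<Rightarrow> 'v \<Rightarrow> bool" and v u1 u2 :: 'v and X Y Z :: 'r
  assumes "tree3 V A"
    and "region_structure V A R"
    and "admissible_coloring V A R col"
    and "markoff_map V A R col p q r s \<phi>"
    and "arrows_for A R \<phi> arr"
    and "v \<in> V" and "R v = {X, Y, Z}"
    and "col X = 1" and "col Y = 2" and "col Z = 3"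
    and "A v u1" and "R v \<inter> R u1 = {X, Y}"
    and "A v u2" and "R v \<inter> R u2 = {X, Z}"
    and "arr v u1" and "arr v u2"
  shows "norm (\<phi> X) \<le> 2 + (norm q + norm r) / 4 \<or> norm (\<phi> Y) < 2 \<or> norm (\<phi> Z) < 2"
proof -
  have distinct: "X \<noteq> Y" "X \<noteq> Z" "Y \<noteq> Z" using assms(8-10) by auto
  have end1: "endreg R v u1 = Z"
    using endreg_eq_remaining_region[of R v X Y Z u1] assms(7,12) distinct by simp
  have end2: "endreg R v u2 = Y"
    using endreg_eq_remaining_region[of R v X Z Y u2] assms(7,14) distinct
    by (simp add: insert_commute)
  have sym: "A u1 v" "A u2 v" using assms(1,11,13) unfolding tree3_def by blast+
  have "\<phi> Z + \<phi> (endreg R u1 v) = r - \<phi> X * \<phi> Y"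
    using markoff_edge_relation[OF assms(4,11,12)] distinct end1 assms(10)
    by (simp add: edge_coef_def)
  then have bound1: "norm (\<phi> X) * norm (\<phi> Y) \<le> norm r + 2 * norm (\<phi> Z)"
    using arrow_away_norm_le[OF assms(5,11) sym(1) assms(15)] end1
    by (intro norm_mult_le_of_edge_relation) auto
  have "\<phi> Y + \<phi> (endreg R u2 v) = q - \<phi> X * \<phi> Z"
    using markoff_edge_relation[OF assms(4,13,14)] distinct end2 assms(9)
    by (simp add: edge_coef_def)
  then have bound2: "norm (\<phi> X) * norm (\<phi> Z) \<le> norm q + 2 * norm (\<phi> Y)"
    using arrow_away_norm_le[OF assms(5,13) sym(2) assms(16)] end2
    by (intro norm_mult_le_of_edge_relation) auto
  show ?thesis
    using le_of_two_product_bounds[OF bound1 bound2] by force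
qed

end
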